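(* Let $\mathcal{D}(A)$ be a straight-line drawing of a four-cycle $A$ with vertices $a_1,a_2,a_3,a_4$ and edges $e_k^A=a_ka_{k\bmod 4+1}$ ($k\in[4]$) as a simple quadrilateral. Call $e_k^A$ good if there is a point $p$ in the outer face of $\mathcal{D}(A)$ such that placing a new vertex $q$ at $p$ and joining it by straight-line segments to $a_1,a_2,a_3,a_4$ yields a planar straight-line drawing of $A+q$ in which $e_k^A$ is an edge on the outer face. Then at most two edges of $A$ are good. *)

theory Defs
  imports "HOL-Analysis.Analysis"
begin

definition sl_drawing :: "(nat \<Rightarrow> real^2) \<Rightarrow> nat set set \<Rightarrow> (real^2) set" where
  "sl_drawing pos E = (\<Union>e\<in>E. convex hull (pos ` e))"

definition planar_sl_drawing :: "(nat \<Rightarrow> real^2) \<Rightarrow> nat set \<Rightarrow> nat set set \<Rightarrow> bool" where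
  "planar_sl_drawing pos V E \<longleftrightarrow>
     inj_on pos V \<and>
     (\<forall>e\<in>E. e \<subseteq> V \<and> card e = 2) \<and>
     (\<forall>e\<in>E. \<forall>w\<in>V - e. pos w \<notin> convex hull (pos ` e)) \<and>
     (\<forall>e\<in>E. \<forall>f\<in>E. e \<noteq> f \<longrightarrow> convex hull (pos ` e) \<inter> convex hull (pos ` f) \<subseteq> pos ` (e \<inter> f))"

definition C4_edges :: "nat set set" where
  "C4_edges = {{k, k mod 4 + 1} | k. k \<in> {1..4}}"

text \<open>A + q: the vertex q is numbered 0 and joined to 1,2,3,4.\<close>

definition W4_edges :: "nat set set" where
  "W4_edges = C4_edges \<union> {{0, k} | k. k \<in> {1..4}}"

text \<open>The outer face of a drawing is its unbounded complementary region (outside);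
an edge lies on the outer face if its segment lies on the boundary of that region.\<close>

definition good_edge :: "(nat \<Rightarrow> real^2) \<Rightarrow> nat \<Rightarrow> bool" where
  "good_edge a k \<longleftrightarrow>
     (\<exists>p \<in> outside (sl_drawing a C4_edges).
        planar_sl_drawing (a(0 := p)) {0..4} W4_edges \<and>
        convex hull ((a(0 := p)) ` {k, k mod 4 + 1})
          \<subseteq> frontier (outside (sl_drawing (a(0 := p)) W4_edges)))"

end

(*
  Let p witness that the edge a_k a_(k+1) is good and let T be the triangle p a_k a_(k+1).
  Near the midpoint of a_k a_(k+1) the drawing of A + q consists of that edge alone.  The
  half-disc there on the side of p lies in T.  If the quadrilateral missed the interior of T,
  that interior would belong to the outer face of A, so the half-disc would meet neither the
  inner face of A (which accumulates at the edge by the Jordan curve theorem) nor the outer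
  face of A + q (which accumulates at the edge because the edge is on its boundary).  Both
  faces would then meet the opposite half-disc, which is connected and avoids A: absurd.
  So A enters T, and as it cannot cross the sides p a_k and p a_(k+1), the path
  a_(k+1) a_(k+2) a_(k+3) a_k stays inside T.

  Consequently the rays from a_k towards a_(k+3) and from a_(k+1) towards a_(k+2) meet.  If
  the opposite edge were good too, the rays from a_(k+3) towards a_k and from a_(k+2) towards
  a_(k+1) would also meet; two lines meeting in both directions meet in a point of both
  segments a_(k+1) a_(k+2) and a_(k+3) a_k, contradicting the simplicity of the quadrilateral.
*)

theory Submission
  imports Defs
begin

section \<open>Inside and outside of plane sets\<close>

lemma connected_subset_interior:
  assumes "connected S" "S \<inter> frontier T = {}" "S \<inter> interior T \<noteq> {}"
  shows "S \<subseteq> interior T"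
proof -
  have "S \<inter> T \<noteq> {}"
    using assms(3) interior_subset by blast
  then have "S \<subseteq> T"
    using connected_Int_frontier[OF assms(1)] assms(2) by blast
  then show ?thesis
    using assms(2) closure_subset by (auto simp: frontier_def)
qed

lemma connected_subset_outside:
  assumes "connected S" "S \<inter> T = {}" "x \<in> S" "x \<in> outside T"
  shows "S \<subseteq> outside T"
proof
  fix y assume "y \<in> S"
  then have "connected_component (- T) x y"
    using assms unfolding connected_component_def by blast
  then show "y \<in> outside T"
    using assms(4) outside_same_component by blast
qed

lemma closure_point_approachable_off_hyperplane:
  fixes m :: "'a::euclidean_space"
  assumes "open U" "m \<in> closure U" "0 < r" "n \<noteq> 0"
  obtains y where "y \<in> U" "y \<in> ball m r" "n \<bullet> y \<noteq> c"
proof -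
  have "U \<inter> ball m r \<noteq> {}"
    using assms(2,3) by (force simp: closure_approachable dist_commute)
  moreover have "\<not> U \<inter> ball m r \<subseteq> {x. n \<bullet> x = c}"
  proof
    assume "U \<inter> ball m r \<subseteq> {x. n \<bullet> x = c}"
    then have "U \<inter> ball m r \<subseteq> interior {x. n \<bullet> x = c}"
      using assms(1) by (intro interior_maximal) auto
    then show False
      using assms(4) \<open>U \<inter> ball m r \<noteq> {}\<close> by simp
  qed
  ultimately show ?thesis
    using that by blast
qed

lemma half_ball_meets_inside_or_outside:
  fixes m :: "'a::euclidean_space"
  assumes "closed Q" "closed W" "Q \<subseteq> W" "0 < r" "n \<noteq> 0"
    and "m \<in> closure (inside Q)" "m \<in> closure (outside W)"
    and Q_flat: "ball m r \<inter> Q \<subseteq> {x. n \<bullet> x = c}"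
  shows "ball m r \<inter> {x. c < n \<bullet> x} \<inter> (inside Q \<union> outside W) \<noteq> {}"
proof
  assume empty: "ball m r \<inter> {x. c < n \<bullet> x} \<inter> (inside Q \<union> outside W) = {}"
  define H where "H = ball m r \<inter> {x. n \<bullet> x < c}"
  obtain y where y: "y \<in> inside Q" "y \<in> ball m r" "n \<bullet> y \<noteq> c"
    using closure_point_approachable_off_hyperplane[OF open_inside[OF assms(1)] assms(6,4,5)] .
  with empty have "y \<in> H"
    by (auto simp: H_def)
  obtain z where z: "z \<in> outside W" "z \<in> ball m r" "n \<bullet> z \<noteq> c"
    using closure_point_approachable_off_hyperplane[OF open_outside[OF assms(2)] assms(7,4,5)] .
  with empty have "z \<in> H"
    by (auto simp: H_def)
  have "H \<subseteq> outside Q"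
  proof (rule connected_subset_outside)
    show "connected H"
      by (simp add: H_def convex_connected convex_Int convex_halfspace_lt)
    show "H \<inter> Q = {}"
      using Q_flat by (force simp: H_def)
    show "z \<in> outside Q"
      using z(1) outside_mono assms(3) by blast
  qed (fact \<open>z \<in> H\<close>)
  then show False
    using \<open>y \<in> H\<close> y(1) inside_Int_outside by blast
qed

lemma connected_closed_segment_minus_endpoint:
  fixes a b :: "'a::euclidean_space"
  shows "connected (closed_segment a b - {a})"
proof (cases "a = b")
  case False
  have "open_segment a b \<subseteq> closed_segment a b - {a}"
    by (auto simp: open_segment_def)
  moreover have "closed_segment a b - {a} \<subseteq> closure (open_segment a b)"
    using False by auto
  ultimately show ?thesis
    using connected_intermediate_closure convex_connected convex_open_segment by blast
qed simp

lemma linear_image_inside_subset: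
  fixes f :: "'a::euclidean_space \<Rightarrow> 'b::euclidean_space"
  assumes f: "linear f" and g: "linear g" and gf: "\<And>x. g (f x) = x" and fg: "\<And>y. f (g y) = y"
  shows "f ` inside S \<subseteq> inside (f ` S)"
proof
  fix y assume "y \<in> f ` inside S"
  then obtain x where x: "x \<in> inside S" and y: "y = f x" by blast
  define K where "K = connected_component_set (- f ` S) y"
  have "y \<notin> f ` S"
    using x gf y by (metis image_iff inside_no_overlap disjoint_iff)
  have "g ` K \<subseteq> connected_component_set (- S) x"
  proof (rule connected_component_maximal)
    have "y \<in> K"
      using \<open>y \<notin> f ` S\<close> by (simp add: K_def)
    then show "x \<in> g ` K"
      using gf y by (metis image_eqI)
    show "connected (g ` K)"
      unfolding K_def by (intro connected_linear_image g connected_connected_component)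
    show "g ` K \<subseteq> - S"
      using connected_component_subset fg unfolding K_def by (fastforce simp: image_iff)
  qed
  then have "bounded (g ` K)"
    using x bounded_subset by (auto simp: inside_def)
  then have "bounded (f ` g ` K)"
    using bounded_linear_image f linear_conv_bounded_linear by blast
  then show "y \<in> inside (f ` S)"
    using \<open>y \<notin> f ` S\<close> fg by (simp add: inside_def K_def image_image)
qed

lemma simple_loop_subset_closure_inside:
  fixes \<gamma> :: "real \<Rightarrow> 'a::euclidean_space"
  assumes "DIM('a) = 2" "simple_path \<gamma>" "pathfinish \<gamma> = pathstart \<gamma>"
  shows "path_image \<gamma> \<subseteq> closure (inside (path_image \<gamma>))"
proof -
  \<comment> \<open>Jordan's theorem is available for curves in the complex plane; transfer it
    along a linear isomorphism.\<close>
  obtain f :: "complex \<Rightarrow> 'a" and g :: "'a \<Rightarrow> complex" where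
    f: "linear f" and g: "linear g" and gf: "\<And>x. g (f x) = x" and fg: "\<And>y. f (g y) = y"
    using isomorphisms_UNIV_UNIV assms(1) by (metis DIM_complex)
  have "inj g"
    by (metis fg injI)
  then have "simple_path (g \<circ> \<gamma>)"
    using assms(2) simple_path_linear_image_eq[OF g] by blast
  moreover have "pathfinish (g \<circ> \<gamma>) = pathstart (g \<circ> \<gamma>)"
    using assms(3) by (simp add: pathfinish_compose pathstart_compose)
  ultimately have "path_image (g \<circ> \<gamma>) \<subseteq> closure (inside (path_image (g \<circ> \<gamma>)))"
    using Jordan_inside_outside frontier_def by (metis Diff_subset)
  then have "f ` path_image (g \<circ> \<gamma>) \<subseteq> closure (f ` inside (path_image (g \<circ> \<gamma>)))"
    using closure_linear_image_subset[OF f] by blast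
  also have "\<dots> \<subseteq> closure (inside (f ` path_image (g \<circ> \<gamma>)))"
    using linear_image_inside_subset[OF f g gf fg] by (rule closure_mono)
  finally show ?thesis
    by (simp add: path_image_compose image_image fg)
qed

section \<open>Triangles\<close>

lemma obtain_separating_normal:
  fixes P A B :: "'a::real_inner"
  assumes "\<not> collinear {P, A, B}"
  obtains n where "n \<bullet> A = n \<bullet> B" "n \<bullet> A < n \<bullet> P"
proof
  define u where "u = B - A"
  define n where "n = (P - A) - ((P - A) \<bullet> u / (u \<bullet> u)) *\<^sub>R u"
  have "u \<noteq> 0"
    using assms by (auto simp: u_def)
  then have "n \<bullet> u = 0"
    by (simp add: n_def inner_diff_left)
  then show "n \<bullet> A = n \<bullet> B"
    by (simp add: u_def inner_diff_right)
  have "n \<noteq> 0"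
  proof
    assume "n = 0"
    then obtain c where "P - A = c *\<^sub>R (B - A)"
      by (auto simp: n_def u_def)
    then have "P = (1 - c) *\<^sub>R A + c *\<^sub>R B"
      by (simp add: algebra_simps)
    then have "P \<in> affine hull {A, B}"
      by (force simp: affine_hull_2)
    then show False
      using assms affine_hull_3_imp_collinear by (metis insert_commute)
  qed
  then have "0 < n \<bullet> n"
    by simp
  moreover have "n \<bullet> (P - A) = n \<bullet> n"
    using \<open>n \<bullet> u = 0\<close> by (simp add: n_def inner_diff_right)
  ultimately show "n \<bullet> A < n \<bullet> P"
    unfolding inner_diff_right by linarith
qed

lemma not_collinear_if_segments_meet_at_endpoints:
  fixes P A B :: "'a::euclidean_space"
  assumes "A \<noteq> B" "P \<notin> S" "closed_segment A B \<subseteq> S"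
    and "closed_segment P A \<inter> S \<subseteq> {A}" "closed_segment P B \<inter> S \<subseteq> {B}"
  shows "\<not> collinear {P, A, B}"
proof
  assume "collinear {P, A, B}"
  then have "P \<in> closed_segment A B \<or> A \<in> closed_segment B P \<or> B \<in> closed_segment P A"
    by (simp add: collinear_between_cases between_mem_segment)
  then show False
    using assms ends_in_segment closed_segment_commute[of B P] by blast
qed

lemma not_collinear_if_interior_convex_hull_3:
  fixes a :: "'a::euclidean_space"
  assumes "DIM('a) = 2" "interior (convex hull {a, b, c}) \<noteq> {}"
  shows "\<not> collinear {a, b, c}"
proof
  assume "collinear {a, b, c}"
  then obtain u v where uv: "{a, b, c} \<subseteq> affine hull {u, v}"
    using collinear_affine_hull by metis
  have "convex hull {a, b, c} \<subseteq> affine hull {u, v}"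
    using uv by (intro hull_minimal) (simp_all add: affine_imp_convex)
  then have "interior (convex hull {a, b, c}) \<subseteq> interior (affine hull {u, v})"
    by (rule interior_mono)
  also have "\<dots> = {}"
    using assms(1) by (intro empty_interior_affine_hull) (simp_all add: card_insert_le_m1)
  finally show False
    using assms(2) by blast
qed

lemma closure_interior_triangle:
  fixes a :: "'a::euclidean_space"
  assumes "DIM('a) = 2" "\<not> collinear {a, b, c}"
  shows "closure (interior (convex hull {a, b, c})) = convex hull {a, b, c}"
proof -
  have "interior (convex hull {a, b, c}) \<noteq> {}"
    using assms interior_convex_hull_3_minimal[OF assms(2,1)]
    by (auto intro!: exI[of _ "1/3"])
  then have "closure (interior (convex hull {a, b, c})) = closure (convex hull {a, b, c})"
    by (simp add: convex_closure_interior)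
  also have "\<dots> = convex hull {a, b, c}"
    by (simp add: compact_imp_closed compact_convex_hull)
  finally show ?thesis .
qed

lemma interior_triangle_strict_side:
  fixes P A B :: "'a::euclidean_space"
  assumes "DIM('a) = 2" "n \<bullet> A = n \<bullet> B" "n \<bullet> A < n \<bullet> P"
    and "x \<in> interior (convex hull {P, A, B})"
  shows "n \<bullet> A < n \<bullet> x"
proof -
  have "\<not> collinear {P, A, B}"
    using assms(1,4) not_collinear_if_interior_convex_hull_3 by blast
  then obtain u v w where u: "0 < u" and "u + v + w = 1" and x: "x = u *\<^sub>R P + v *\<^sub>R A + w *\<^sub>R B"
    using assms(4) interior_convex_hull_3_minimal[OF _ assms(1)] by auto
  then have w: "w = 1 - u - v"
    by simp
  have "n \<bullet> x - n \<bullet> A = u * (n \<bullet> P - n \<bullet> A)"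
    unfolding x w using assms(2) by (simp add: inner_add_right algebra_simps)
  moreover have "0 < u * (n \<bullet> P - n \<bullet> A)"
    using u assms(3) by simp
  ultimately show ?thesis
    by linarith
qed

lemma interior_triangle_not_collinear:
  fixes P A B C :: "'a::euclidean_space"
  assumes "DIM('a) = 2" "C \<in> interior (convex hull {P, A, B})"
  shows "\<not> collinear {A, B, C}"
proof
  assume "collinear {A, B, C}"
  have "\<not> collinear {P, A, B}"
    using assms not_collinear_if_interior_convex_hull_3 by blast
  then obtain n where n: "n \<bullet> A = n \<bullet> B" "n \<bullet> A < n \<bullet> P"
    by (rule obtain_separating_normal)
  have "A \<noteq> B"
    using \<open>\<not> collinear {P, A, B}\<close> by auto
  then have "C \<in> affine hull {A, B}"
    using \<open>collinear {A, B, C}\<close> collinear_3_affine_hull by blast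
  also have "affine hull {A, B} \<subseteq> {x. n \<bullet> x = n \<bullet> A}"
    using n(1) by (intro hull_minimal) (simp_all add: affine_hyperplane)
  finally show False
    using interior_triangle_strict_side[OF assms(1) n assms(2)] by simp
qed

lemma interior_triangle_disjoint_outside:
  fixes a :: "'a::euclidean_space"
  assumes "DIM('a) = 2" "closed_segment a b \<union> closed_segment b c \<union> closed_segment c a \<subseteq> W"
  shows "interior (convex hull {a, b, c}) \<inter> outside W = {}"
proof -
  have "interior (convex hull {a, b, c}) - W \<subseteq> inside W"
    using inside_mono[OF assms(2)] inside_of_triangle[OF assms(1)] by simp
  then show ?thesis
    using inside_Int_outside outside_no_overlap by blast
qed

lemma interior_triangle_subset_outside:
  fixes P A B :: "'a::euclidean_space"
  assumes "DIM('a) = 2" "\<not> collinear {P, A, B}" "closed S" "P \<in> outside S"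
    and "S \<inter> interior (convex hull {P, A, B}) = {}"
  shows "interior (convex hull {P, A, B}) \<subseteq> outside S"
proof -
  have "P \<in> closure (interior (convex hull {P, A, B}))"
    using closure_interior_triangle[OF assms(1,2)] by (simp add: hull_inc)
  then obtain v where "v \<in> interior (convex hull {P, A, B})" "v \<in> outside S"
    using assms(3,4) open_outside by (meson open_Int_closure_eq_empty disjoint_iff)
  then show ?thesis
    using assms(5) by (intro connected_subset_outside) (auto simp: convex_connected)
qed

lemma half_ball_subset_interior_triangle:
  fixes P A B :: "'a::euclidean_space"
  assumes DIM: "DIM('a) = 2" and "\<not> collinear {P, A, B}" and n: "n \<bullet> A = n \<bullet> B" "n \<bullet> A < n \<bullet> P"
    and "m \<in> closed_segment A B" "0 < r"
    and "ball m r \<inter> frontier (convex hull {P, A, B}) \<subseteq> closed_segment A B"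
  shows "ball m r \<inter> {x. n \<bullet> A < n \<bullet> x} \<subseteq> interior (convex hull {P, A, B})"
proof (rule connected_subset_interior)
  let ?T = "convex hull {P, A, B}"
  show "connected (ball m r \<inter> {x. n \<bullet> A < n \<bullet> x})"
    by (simp add: convex_connected convex_Int convex_halfspace_gt)
  have "closed_segment A B \<subseteq> {x. n \<bullet> x = n \<bullet> A}"
    unfolding segment_convex_hull using n(1) by (intro hull_minimal) (auto simp: convex_hyperplane)
  then show "ball m r \<inter> {x. n \<bullet> A < n \<bullet> x} \<inter> frontier ?T = {}"
    using assms(7) by force
  have "closed_segment A B \<subseteq> ?T"
    unfolding segment_convex_hull by (rule hull_mono) auto
  then have "m \<in> closure (interior ?T)"
    using assms(5) closure_interior_triangle[OF DIM assms(2)] by auto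
  then obtain w where "w \<in> interior ?T" "w \<in> ball m r"
    using \<open>0 < r\<close> by (force simp: closure_approachable dist_commute)
  then show "ball m r \<inter> {x. n \<bullet> A < n \<bullet> x} \<inter> interior ?T \<noteq> {}"
    using interior_triangle_strict_side[OF DIM n] by auto
qed

lemma rays_meet_in_triangle:
  fixes P A B C D :: "'a::euclidean_space"
  assumes "DIM('a) = 2"
    and "C \<in> interior (convex hull {P, A, B})" "D \<in> interior (convex hull {P, A, B})"
  obtains s t where "0 < s" "0 < t" "A + s *\<^sub>R (D - A) = B + t *\<^sub>R (C - B)"
proof -
  have "\<not> collinear {P, A, B}"
    using assms(1,2) not_collinear_if_interior_convex_hull_3 by blast
  then have int: "interior (convex hull {P, A, B}) =
      {v. \<exists>x y z. 0 < x \<and> 0 < y \<and> 0 < z \<and> x + y + z = 1 \<and> x *\<^sub>R P + y *\<^sub>R A + z *\<^sub>R B = v}"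
    using assms(1) by (rule interior_convex_hull_3_minimal)
  obtain a' b' c' where C: "0 < a'" "0 < b'" "a' + b' + c' = 1" "C = a' *\<^sub>R P + b' *\<^sub>R A + c' *\<^sub>R B"
    using assms(2) int by auto
  obtain a b c where D: "0 < a" "0 < c" "a + b + c = 1" "D = a *\<^sub>R P + b *\<^sub>R A + c *\<^sub>R B"
    using assms(3) int by auto
  \<comment> \<open>The common point is \<open>(a a' P + a b' A + a' c B) / den\<close>.\<close>
  define den where "den = a' * c + a * (a' + b')"
  have "0 < den"
    using C D by (simp add: den_def add_pos_pos)
  have D': "A + s *\<^sub>R (D - A) = (s * a) *\<^sub>R P + (1 - s * (a + c)) *\<^sub>R A + (s * c) *\<^sub>R B" for s
  proof -
    have b: "b = 1 - a - c"
      using D(3) by simp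
    show ?thesis
      unfolding D(4) b by (simp add: algebra_simps)
  qed
  have C': "B + t *\<^sub>R (C - B) = (t * a') *\<^sub>R P + (t * b') *\<^sub>R A + (1 - t * (a' + b')) *\<^sub>R B" for t
  proof -
    have c': "c' = 1 - a' - b'"
      using C(3) by simp
    show ?thesis
      unfolding C(4) c' by (simp add: algebra_simps)
  qed
  have "A + (a' / den) *\<^sub>R (D - A) = B + (a / den) *\<^sub>R (C - B)"
    unfolding D' C' using \<open>0 < den\<close> by (simp add: den_def field_simps)
  moreover have "0 < a' / den" "0 < a / den"
    using C D \<open>0 < den\<close> by simp_all
  ultimately show ?thesis
    using that by blast
qed

lemma collinear_if_parallel_lines_meet:
  fixes A B C D :: "'a::real_vector"
  assumes "D - A = k *\<^sub>R (C - B)" "A + s *\<^sub>R (D - A) = B + t *\<^sub>R (C - B)"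
  shows "collinear {A, B, C}"
proof -
  have "A - B = t *\<^sub>R (C - B) - s *\<^sub>R (D - A)"
    using assms(2) by (simp add: algebra_simps)
  also have "\<dots> = (t - s * k) *\<^sub>R (C - B)"
    unfolding assms(1) by (simp add: algebra_simps)
  finally have "collinear {0, C - B, A - B}"
    using collinear_lemma by blast
  then show ?thesis
    using collinear_3[of A B C] by (simp add: insert_commute)
qed

lemma segments_meet_if_rays_meet_twice:
  fixes A B C D :: "'a::real_vector"
  assumes ncol: "\<not> collinear {A, B, C}"
    and "0 < s" "0 < t" and X: "A + s *\<^sub>R (D - A) = B + t *\<^sub>R (C - B)"
    and "0 < s'" "0 < t'" and Y: "C + s' *\<^sub>R (B - C) = D + t' *\<^sub>R (A - D)"
  shows "closed_segment B C \<inter> closed_segment D A \<noteq> {}"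
proof -
  define \<sigma> where "\<sigma> = s + t' - 1"
  define \<tau> where "\<tau> = t + s' - 1"
  have sDA: "s *\<^sub>R (D - A) = B - A + t *\<^sub>R (C - B)"
    using X by (simp add: algebra_simps)
  have tDA: "t' *\<^sub>R (D - A) = D - C - s' *\<^sub>R (B - C)"
    using Y by (simp add: algebra_simps)
  have "\<sigma> *\<^sub>R (D - A) = s *\<^sub>R (D - A) + t' *\<^sub>R (D - A) - (D - A)"
    by (simp add: \<sigma>_def algebra_simps)
  also have "\<dots> = \<tau> *\<^sub>R (C - B)"
    unfolding sDA tDA by (simp add: \<tau>_def algebra_simps)
  finally have parallel: "\<sigma> *\<^sub>R (D - A) = \<tau> *\<^sub>R (C - B)" .
  have "\<sigma> = 0"
  proof (rule ccontr)
    assume "\<sigma> \<noteq> 0"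
    then have "D - A = inverse \<sigma> *\<^sub>R (\<sigma> *\<^sub>R (D - A))"
      by simp
    also have "\<dots> = (\<tau> / \<sigma>) *\<^sub>R (C - B)"
      unfolding parallel by (simp add: field_simps)
    finally show False
      using collinear_if_parallel_lines_meet X ncol by blast
  qed
  moreover have "C \<noteq> B"
    using ncol by auto
  ultimately have "\<tau> = 0"
    using parallel by simp
  have "A + s *\<^sub>R (D - A) \<in> closed_segment D A"
    unfolding in_segment using \<open>\<sigma> = 0\<close> \<open>0 < s\<close> \<open>0 < t'\<close>
    by (intro exI[of _ "1 - s"]) (simp add: \<sigma>_def algebra_simps)
  moreover have "B + t *\<^sub>R (C - B) \<in> closed_segment B C"
    unfolding in_segment using \<open>\<tau> = 0\<close> \<open>0 < t\<close> \<open>0 < s'\<close>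
    by (intro exI[of _ t]) (simp add: \<tau>_def algebra_simps)
  ultimately show ?thesis
    using X by auto
qed

lemma segments_meet_if_vertices_in_opposite_triangles:
  fixes P Q A B C D :: "'a::euclidean_space"
  assumes "DIM('a) = 2"
    and "C \<in> interior (convex hull {P, A, B})" "D \<in> interior (convex hull {P, A, B})"
    and "A \<in> interior (convex hull {Q, C, D})" "B \<in> interior (convex hull {Q, C, D})"
  shows "closed_segment B C \<inter> closed_segment D A \<noteq> {}"
proof -
  obtain s t where "0 < s" "0 < t" "A + s *\<^sub>R (D - A) = B + t *\<^sub>R (C - B)"
    using rays_meet_in_triangle[OF assms(1-3)] .
  moreover obtain s' t' where "0 < s'" "0 < t'" "C + s' *\<^sub>R (B - C) = D + t' *\<^sub>R (A - D)"
    using rays_meet_in_triangle[OF assms(1,4,5)] .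
  ultimately show ?thesis
    using segments_meet_if_rays_meet_twice interior_triangle_not_collinear[OF assms(1,2)] by blast
qed

section \<open>Quadrilaterals\<close>

definition quadrilateral :: "'a::real_vector \<Rightarrow> 'a \<Rightarrow> 'a \<Rightarrow> 'a \<Rightarrow> 'a set" where
  "quadrilateral A B C D =
     closed_segment A B \<union> closed_segment B C \<union> closed_segment C D \<union> closed_segment D A"

definition simple_quadrilateral :: "'a::real_vector \<Rightarrow> 'a \<Rightarrow> 'a \<Rightarrow> 'a \<Rightarrow> bool" where
  "simple_quadrilateral A B C D \<longleftrightarrow>
     A \<noteq> B \<and> B \<noteq> C \<and> C \<noteq> D \<and> D \<noteq> A \<and>
     closed_segment A B \<inter> closed_segment B C \<subseteq> {B} \<and>
     closed_segment B C \<inter> closed_segment C D \<subseteq> {C} \<and>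
     closed_segment C D \<inter> closed_segment D A \<subseteq> {D} \<and>
     closed_segment D A \<inter> closed_segment A B \<subseteq> {A} \<and>
     closed_segment A B \<inter> closed_segment C D = {} \<and>
     closed_segment B C \<inter> closed_segment D A = {}"

lemma closed_quadrilateral:
  fixes A :: "'a::real_normed_vector"
  shows "closed (quadrilateral A B C D)"
  by (simp add: quadrilateral_def closed_Un)

lemma simple_quadrilateral_subset_closure_inside:
  fixes A :: "'a::euclidean_space"
  assumes "DIM('a) = 2" "simple_quadrilateral A B C D"
  shows "quadrilateral A B C D \<subseteq> closure (inside (quadrilateral A B C D))"
proof -
  let ?\<gamma> = "linepath A B +++ linepath B C +++ linepath C D +++ linepath D A"
  have "arc (linepath C D +++ linepath D A)"
    using assms(2) by (intro arc_join) (auto simp: simple_quadrilateral_def)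
  then have "arc (linepath B C +++ linepath C D +++ linepath D A)"
    using assms(2) by (intro arc_join) (auto simp: simple_quadrilateral_def path_image_join)
  then have "simple_path ?\<gamma>"
    using assms(2)
    by (intro simple_path_join_loop) (auto simp: simple_quadrilateral_def path_image_join)
  moreover have "path_image ?\<gamma> = quadrilateral A B C D"
    by (simp add: path_image_join quadrilateral_def Un_assoc)
  ultimately show ?thesis
    using simple_loop_subset_closure_inside[OF assms(1)] by fastforce
qed

lemma obtain_ball_midpoint_meeting_only_edge:
  fixes A B C D P :: "'a::euclidean_space"
  assumes quad: "simple_quadrilateral A B C D"
    and PA: "closed_segment P A \<inter> quadrilateral A B C D \<subseteq> {A}"
    and PB: "closed_segment P B \<inter> quadrilateral A B C D \<subseteq> {B}"
  obtains r where "0 < r" "ball (midpoint A B) r \<inter>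
    (quadrilateral A B C D \<union> closed_segment P A \<union> closed_segment P B) \<subseteq> closed_segment A B"
proof -
  let ?m = "midpoint A B"
  define K where "K = closed_segment B C \<union> closed_segment C D \<union> closed_segment D A
    \<union> closed_segment P A \<union> closed_segment P B"
  have "A \<noteq> B"
    using quad by (simp add: simple_quadrilateral_def)
  then have "?m \<in> closed_segment A B" "?m \<noteq> A" "?m \<noteq> B"
    by simp_all
  moreover have "?m \<in> quadrilateral A B C D"
    using \<open>?m \<in> closed_segment A B\<close> by (simp add: quadrilateral_def)
  ultimately have "?m \<notin> K"
    using quad PA PB unfolding K_def simple_quadrilateral_def by blast
  moreover have "closed K"
    by (simp add: K_def closed_Un)
  ultimately obtain r where "0 < r" and "ball ?m r \<subseteq> - K"
    using open_contains_ball open_Compl by blast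
  moreover have "quadrilateral A B C D \<union> closed_segment P A \<union> closed_segment P B
      \<subseteq> closed_segment A B \<union> K"
    by (auto simp: K_def quadrilateral_def)
  ultimately show ?thesis
    using that by blast
qed

lemma quadrilateral_meets_interior_triangle:
  fixes A B C D P :: "'a::euclidean_space"
  assumes DIM: "DIM('a) = 2" and quad: "simple_quadrilateral A B C D"
    and P: "P \<in> outside (quadrilateral A B C D)"
    and PA: "closed_segment P A \<inter> quadrilateral A B C D \<subseteq> {A}"
    and PB: "closed_segment P B \<inter> quadrilateral A B C D \<subseteq> {B}"
    and W: "closed W" "quadrilateral A B C D \<union> closed_segment P A \<union> closed_segment P B \<subseteq> W"
    and AB: "closed_segment A B \<subseteq> frontier (outside W)"
  shows "quadrilateral A B C D \<inter> interior (convex hull {P, A, B}) \<noteq> {}"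
proof
  let ?Q = "quadrilateral A B C D" and ?T = "convex hull {P, A, B}" and ?m = "midpoint A B"
  assume disjoint: "?Q \<inter> interior ?T = {}"
  have AB_Q: "closed_segment A B \<subseteq> ?Q"
    unfolding quadrilateral_def by blast
  have m_AB: "?m \<in> closed_segment A B"
    by simp
  have ncol: "\<not> collinear {P, A, B}"
    using quad P PA PB AB_Q outside_no_overlap
    by (intro not_collinear_if_segments_meet_at_endpoints) (auto simp: simple_quadrilateral_def)
  then obtain n where n: "n \<bullet> A = n \<bullet> B" "n \<bullet> A < n \<bullet> P"
    by (rule obtain_separating_normal)
  obtain r where "0 < r" and ball_r: "ball ?m r \<inter>
      (?Q \<union> closed_segment P A \<union> closed_segment P B) \<subseteq> closed_segment A B"
    using obtain_ball_midpoint_meeting_only_edge[OF quad PA PB] .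
  have "closed_segment A B \<subseteq> {x. n \<bullet> x = n \<bullet> A}"
    unfolding segment_convex_hull using n(1) by (intro hull_minimal) (auto simp: convex_hyperplane)
  then have "ball ?m r \<inter> ?Q \<subseteq> {x. n \<bullet> x = n \<bullet> A}"
    using ball_r by blast
  moreover have "?m \<in> closure (inside ?Q)"
    using simple_quadrilateral_subset_closure_inside[OF DIM quad] AB_Q m_AB by blast
  moreover have "?m \<in> closure (outside W)"
    using AB m_AB frontier_closures by blast
  moreover have "n \<noteq> 0"
    using n by auto
  ultimately have "ball ?m r \<inter> {x. n \<bullet> A < n \<bullet> x} \<inter> (inside ?Q \<union> outside W) \<noteq> {}"
    using half_ball_meets_inside_or_outside[OF closed_quadrilateral W(1) _ \<open>0 < r\<close>] W(2) by blast
  moreover have "ball ?m r \<inter> frontier ?T \<subseteq> closed_segment A B"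
    using ball_r AB_Q frontier_of_triangle[OF DIM] by (auto simp: closed_segment_commute)
  then have "ball ?m r \<inter> {x. n \<bullet> A < n \<bullet> x} \<subseteq> interior ?T"
    using half_ball_subset_interior_triangle[OF DIM ncol n m_AB \<open>0 < r\<close>] by blast
  moreover have "interior ?T \<subseteq> outside ?Q"
    using interior_triangle_subset_outside[OF DIM ncol closed_quadrilateral P] disjoint by blast
  moreover have "interior ?T \<inter> outside W = {}"
    using W(2) by (intro interior_triangle_disjoint_outside DIM)
      (auto simp: closed_segment_commute quadrilateral_def)
  ultimately show False
    using inside_Int_outside by blast
qed

lemma quadrilateral_opposite_vertices_in_triangle:
  fixes A B C D P :: "'a::euclidean_space"
  assumes DIM: "DIM('a) = 2" and quad: "simple_quadrilateral A B C D"
    and P: "P \<in> outside (quadrilateral A B C D)"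
    and PA: "closed_segment P A \<inter> quadrilateral A B C D \<subseteq> {A}"
    and PB: "closed_segment P B \<inter> quadrilateral A B C D \<subseteq> {B}"
    and W: "closed W" "quadrilateral A B C D \<union> closed_segment P A \<union> closed_segment P B \<subseteq> W"
    and AB: "closed_segment A B \<subseteq> frontier (outside W)"
  shows "C \<in> interior (convex hull {P, A, B})" "D \<in> interior (convex hull {P, A, B})"
proof -
  let ?Q = "quadrilateral A B C D" and ?T = "convex hull {P, A, B}"
  define R where "R = ?Q - closed_segment A B"
  have frontier_T: "frontier ?T = closed_segment P A \<union> closed_segment A B \<union> closed_segment B P"
    using frontier_of_triangle[OF DIM] by simp
  have sides: "closed_segment A B \<inter> closed_segment B C \<subseteq> {B}"
    "closed_segment A B \<inter> closed_segment C D = {}" "closed_segment D A \<inter> closed_segment A B \<subseteq> {A}"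
    "B \<noteq> C" "D \<noteq> A"
    using quad by (simp_all add: simple_quadrilateral_def)
  have R_eq: "R = (closed_segment B C - {B}) \<union> closed_segment C D \<union> (closed_segment A D - {A})"
    unfolding R_def quadrilateral_def
    using sides ends_in_segment[of A B] closed_segment_commute[of D A] by blast
  have "connected R"
  proof -
    have "connected ((closed_segment B C - {B}) \<union> closed_segment C D)"
      using sides by (intro connected_Un connected_closed_segment_minus_endpoint) auto
    then show ?thesis
      unfolding R_eq using sides
      by (intro connected_Un connected_closed_segment_minus_endpoint) auto
  qed
  moreover have "R \<inter> frontier ?T = {}"
    using PA PB unfolding R_def frontier_T by (auto simp: closed_segment_commute)
  moreover have "R \<inter> interior ?T \<noteq> {}"
  proof -
    have "closed_segment A B \<inter> interior ?T = {}"
      using frontier_T by (auto simp: frontier_def)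
    then show ?thesis
      using quadrilateral_meets_interior_triangle[OF assms] unfolding R_def by blast
  qed
  ultimately have "R \<subseteq> interior ?T"
    by (rule connected_subset_interior)
  moreover have "C \<in> R" "D \<in> R"
    by (simp_all add: R_eq)
  ultimately show "C \<in> interior ?T" "D \<in> interior ?T"
    by auto
qed

section \<open>Straight-line drawings of the four-cycle\<close>

abbreviation cyc_succ :: "nat \<Rightarrow> nat" where
  "cyc_succ k \<equiv> k mod 4 + 1"

lemma C4_edges_cycle:
  assumes "k \<in> {1..4}" "l = cyc_succ k" "m = cyc_succ l" "n = cyc_succ m"
  shows "C4_edges = {{k, l}, {l, m}, {m, n}, {n, k}}" "distinct [0, k, l, m, n]"
    "{k, l, m, n} = {1..4}" "cyc_succ n = k"
proof -
  have "k = 1 \<or> k = 2 \<or> k = 3 \<or> k = 4"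
    using assms(1) by auto
  then show "distinct [0, k, l, m, n]" "{k, l, m, n} = {1..4}" "cyc_succ n = k"
    using assms(2-4) by auto
  have "C4_edges = (\<lambda>i. {i, cyc_succ i}) ` {1..4}"
    unfolding C4_edges_def by blast
  then show "C4_edges = {{k, l}, {l, m}, {m, n}, {n, k}}"
    unfolding \<open>{k, l, m, n} = {1..4}\<close>[symmetric] using assms(2-4) \<open>cyc_succ n = k\<close> by simp
qed

lemma closed_segment_subset_sl_drawing:
  "{x, y} \<in> E \<Longrightarrow> closed_segment (q x) (q y) \<subseteq> sl_drawing q E"
  by (auto simp: sl_drawing_def segment_convex_hull)

lemma closed_sl_drawing:
  assumes "finite E" "\<And>e. e \<in> E \<Longrightarrow> finite e"
  shows "closed (sl_drawing q E)"
proof -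
  have "closed (convex hull (q ` e))" if "e \<in> E" for e
    using assms(2)[OF that] by (meson compact_imp_closed compact_convex_hull finite_imp_compact finite_imageI)
  then show ?thesis
    using assms(1) by (simp add: sl_drawing_def closed_UN)
qed

lemma planar_sl_drawing_segments_meet:
  assumes "planar_sl_drawing q V E" "{x, y} \<in> E" "{z, w} \<in> E" "{x, y} \<noteq> {z, w}"
  shows "closed_segment (q x) (q y) \<inter> closed_segment (q z) (q w) \<subseteq> q ` ({x, y} \<inter> {z, w})"
proof -
  have "\<forall>e\<in>E. \<forall>f\<in>E. e \<noteq> f \<longrightarrow>
      convex hull (q ` e) \<inter> convex hull (q ` f) \<subseteq> q ` (e \<inter> f)"
    using assms(1) by (simp add: planar_sl_drawing_def)
  from this[rule_format, OF assms(2-4)] show ?thesis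
    by (simp add: segment_convex_hull)
qed

lemma planar_sl_drawing_simple_quadrilateral:
  assumes planar: "planar_sl_drawing q V E" and cycle: "{{i, j}, {j, k}, {k, l}, {l, i}} \<subseteq> E"
    and "distinct [i, j, k, l]"
  shows "simple_quadrilateral (q i) (q j) (q k) (q l)"
proof -
  have "inj_on q V" and edges: "\<forall>e\<in>E. e \<subseteq> V \<and> card e = 2"
    using planar by (simp_all add: planar_sl_drawing_def)
  have "{i, j} \<subseteq> V" "{k, l} \<subseteq> V"
    using edges cycle by auto
  with \<open>inj_on q V\<close> have "q i \<noteq> q j \<and> q j \<noteq> q k \<and> q k \<noteq> q l \<and> q l \<noteq> q i"
    using \<open>distinct [i, j, k, l]\<close> by (auto dest: inj_onD)
  moreover note meet = planar_sl_drawing_segments_meet[OF planar]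
  have "closed_segment (q i) (q j) \<inter> closed_segment (q j) (q k) \<subseteq> {q j}"
    using meet[of i j j k] cycle \<open>distinct [i, j, k, l]\<close> by (auto simp: doubleton_eq_iff)
  moreover have "closed_segment (q j) (q k) \<inter> closed_segment (q k) (q l) \<subseteq> {q k}"
    using meet[of j k k l] cycle \<open>distinct [i, j, k, l]\<close> by (auto simp: doubleton_eq_iff)
  moreover have "closed_segment (q k) (q l) \<inter> closed_segment (q l) (q i) \<subseteq> {q l}"
    using meet[of k l l i] cycle \<open>distinct [i, j, k, l]\<close> by (auto simp: doubleton_eq_iff)
  moreover have "closed_segment (q l) (q i) \<inter> closed_segment (q i) (q j) \<subseteq> {q i}"
    using meet[of l i i j] cycle \<open>distinct [i, j, k, l]\<close> by (auto simp: doubleton_eq_iff)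
  moreover have "closed_segment (q i) (q j) \<inter> closed_segment (q k) (q l) = {}"
    using meet[of i j k l] cycle \<open>distinct [i, j, k, l]\<close> by (auto simp: doubleton_eq_iff)
  moreover have "closed_segment (q j) (q k) \<inter> closed_segment (q l) (q i) = {}"
    using meet[of j k l i] cycle \<open>distinct [i, j, k, l]\<close> by (auto simp: doubleton_eq_iff)
  ultimately show ?thesis
    unfolding simple_quadrilateral_def by blast
qed

lemma planar_sl_drawing_spoke:
  assumes planar: "planar_sl_drawing q V E" and cycle: "{{i, j}, {j, k}, {k, l}, {l, i}} \<subseteq> E"
    and "{p, x} \<in> E" "p \<notin> {i, j, k, l}"
  shows "closed_segment (q p) (q x) \<inter> quadrilateral (q i) (q j) (q k) (q l) \<subseteq> {q x}"
proof -
  have "closed_segment (q p) (q x) \<inter> closed_segment (q u) (q v) \<subseteq> {q x}"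
    if "{u, v} \<in> E" "p \<notin> {u, v}" for u v
  proof -
    have "{p, x} \<noteq> {u, v}"
      using that(2) by auto
    then show ?thesis
      using planar_sl_drawing_segments_meet[OF planar \<open>{p, x} \<in> E\<close> that(1)] that(2) by auto
  qed
  then show ?thesis
    using cycle \<open>p \<notin> {i, j, k, l}\<close> unfolding quadrilateral_def by (simp add: Int_Un_distrib)
qed

lemma good_edge_opposite_vertices_in_triangle:
  assumes "good_edge a k" "k \<in> {1..4}" "l = cyc_succ k" "m = cyc_succ l" "n = cyc_succ m"
  obtains p where "simple_quadrilateral (a k) (a l) (a m) (a n)"
    "a m \<in> interior (convex hull {p, a k, a l})" "a n \<in> interior (convex hull {p, a k, a l})"
proof -
  obtain p where p_out: "p \<in> outside (sl_drawing a C4_edges)"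
    and planar: "planar_sl_drawing (a(0 := p)) {0..4} W4_edges"
    and edge_frontier:
      "convex hull ((a(0 := p)) ` {k, l}) \<subseteq> frontier (outside (sl_drawing (a(0 := p)) W4_edges))"
    using assms(1,3) unfolding good_edge_def by blast
  define q where "q = a(0 := p)"
  note cycle = C4_edges_cycle[OF assms(2-5)]
  have q_eq: "q 0 = p" "q k = a k" "q l = a l" "q m = a m" "q n = a n"
    using cycle(2) by (simp_all add: q_def)
  have cycle_W4: "{{k, l}, {l, m}, {m, n}, {n, k}} \<subseteq> W4_edges"
    using cycle(1) by (simp add: W4_edges_def)
  have spokes: "{0, x} \<in> W4_edges" if "x \<in> {k, l, m, n}" for x
    using that cycle(3) by (auto simp: W4_edges_def)
  have "0 \<notin> {k, l, m, n}"
    using cycle(2) by auto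
  have quad: "simple_quadrilateral (q k) (q l) (q m) (q n)"
    using planar_sl_drawing_simple_quadrilateral[OF planar[folded q_def] cycle_W4] cycle(2) by simp
  have "sl_drawing a C4_edges = quadrilateral (q k) (q l) (q m) (q n)"
    unfolding cycle(1) q_eq by (simp add: sl_drawing_def quadrilateral_def segment_convex_hull Un_assoc)
  then have "q 0 \<in> outside (quadrilateral (q k) (q l) (q m) (q n))"
    using p_out q_eq by simp
  moreover have "closed (sl_drawing q W4_edges)"
    by (rule closed_sl_drawing) (auto simp: W4_edges_def C4_edges_def)
  moreover have "quadrilateral (q k) (q l) (q m) (q n)
      \<union> closed_segment (q 0) (q k) \<union> closed_segment (q 0) (q l) \<subseteq> sl_drawing q W4_edges"
    using cycle_W4 spokes unfolding quadrilateral_def by (auto dest: closed_segment_subset_sl_drawing)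
  moreover have "closed_segment (q k) (q l) \<subseteq> frontier (outside (sl_drawing q W4_edges))"
    using edge_frontier[folded q_def] by (simp add: segment_convex_hull)
  ultimately have "q m \<in> interior (convex hull {q 0, q k, q l})"
    "q n \<in> interior (convex hull {q 0, q k, q l})"
    using quadrilateral_opposite_vertices_in_triangle[OF _ quad]
      planar_sl_drawing_spoke[OF planar[folded q_def] cycle_W4 spokes \<open>0 \<notin> {k, l, m, n}\<close>]
    by auto
  then show ?thesis
    using that quad q_eq by auto
qed

lemma good_edge_opposite_not_good:
  assumes "k \<in> {1..4}" "good_edge a k"
  shows "\<not> good_edge a (cyc_succ (cyc_succ k))"
proof
  define l m n where "l = cyc_succ k" and "m = cyc_succ l" and "n = cyc_succ m"
  note cycle = C4_edges_cycle[OF assms(1) l_def m_def n_def]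
  assume "good_edge a (cyc_succ (cyc_succ k))"
  then have "good_edge a m" "m \<in> {1..4}"
    using cycle(3) by (auto simp: l_def m_def)
  obtain p where quad: "simple_quadrilateral (a k) (a l) (a m) (a n)"
    and "a m \<in> interior (convex hull {p, a k, a l})" "a n \<in> interior (convex hull {p, a k, a l})"
    using good_edge_opposite_vertices_in_triangle[OF assms(2,1) l_def m_def n_def] .
  moreover obtain p' where
    "a k \<in> interior (convex hull {p', a m, a n})" "a l \<in> interior (convex hull {p', a m, a n})"
    using good_edge_opposite_vertices_in_triangle[OF \<open>good_edge a m\<close> \<open>m \<in> {1..4}\<close> n_def]
      cycle(4) l_def by metis
  ultimately have "closed_segment (a l) (a m) \<inter> closed_segment (a n) (a k) \<noteq> {}"
    by (intro segments_meet_if_vertices_in_opposite_triangles) auto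
  then show False
    using quad by (simp add: simple_quadrilateral_def)
qed

theorem lemma8:
  fixes a :: "nat \<Rightarrow> real^2"
  assumes "planar_sl_drawing a {1..4} C4_edges"
  shows "card {k \<in> {1..4::nat}. good_edge a k} \<le> 2"
proof -
  let ?good = "{k \<in> {1..4::nat}. good_edge a k}"
  have "cyc_succ (cyc_succ 1) = (3::nat)" "cyc_succ (cyc_succ 2) = (4::nat)"
    by simp_all
  then have "\<not> (good_edge a 1 \<and> good_edge a 3)" "\<not> (good_edge a 2 \<and> good_edge a 4)"
    using good_edge_opposite_not_good[of 1 a] good_edge_opposite_not_good[of 2 a]
    by (simp_all only: atLeastAtMost_iff) auto
  moreover have "k = 1 \<or> k = 2 \<or> k = 3 \<or> k = 4" if "k \<in> ?good" for k
    using that by auto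
  ultimately have "?good \<subseteq> {if good_edge a 1 then 1 else 3, if good_edge a 2 then 2 else 4}"
    by auto
  then have "card ?good \<le> card {if good_edge a 1 then 1 else 3, if good_edge a 2 then 2 else (4::nat)}"
    by (rule card_mono[rotated]) simp
  also have "\<dots> \<le> 2"
    by (rule card_insert_le_m1) auto
  finally show ?thesis .
qed

end
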